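(* For all $A,B\in[\mathbb{N}]^{<\omega}$ we have $d_{\mathrm{sum}}(A,B)=d_{\mathrm{I}}(A,B)$. Moreover, if $\#A=\#B=k$, then there is a path of length $d_{\mathrm{I}}(A,B)$ from $A$ to $B$ in the universal interlacing graph all of whose vertices lie in $[\mathbb{N}]^k$; consequently the restriction of $d_{\mathrm{I}}$ to $[\mathbb{N}]^k$ equals $d^{(k)}_{\mathrm{I}}$.
   Context: The universal interlacing graph has vertex set $[\mathbb{N}]^{<\omega}$ (finite subsets of $\mathbb{N}$, listed increasingly). Two vertices $A=\{a_1<\dots<a_n\}$ and $B=\{b_1<\dots<b_m\}$ with $A\ne B$ are adjacent iff one of: (i) $n=m+1$ and $a_i\le b_i\le a_{i+1}$ for $1\le i\le m$; (ii) $m=n+1$ and $b_i\le a_i\le b_{i+1}$ for $1\le i\le n$; (iii) $n=m$, $a_i\le b_i\le a_{i+1}$ for $1\le i<n$, and $a_n\le b_n$; (iv) $n=m$, $b_i\le a_i\le b_{i+1}$ for $1\le i<n$, and $b_n\le a_n$. Also $\emptyset$ is adjacent to every singleton. $d_{\mathrm{I}}$ is the shortest-path metric of this graph. For $k\in\mathbb{N}$, Kalton's interlacing graph on $[\mathbb{N}]^k$ (subsets of cardinality $k$) has edges given by (iii) or (iv), and $d^{(k)}_{\mathrm{I}}$ is its graph metric. The summing distance is $d_{\mathrm{sum}}(A,B)=\max\{|\#(A\cap E)-\#(B\cap E)|: E\text{ an interval of }\mathbb{N}\}$ (equivalently $\|\sum_{i\in A}s_i-\sum_{i\in B}s_i\|_{\mathrm{sum}}$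 with $\|\sum a_is_i\|_{\mathrm{sum}}=\sup_{k\le m}|\sum_{i=k}^m a_i|$). *)

theory Defs
  imports "HOL-Analysis.Analysis" "HOL-Library.Extended_Nat"
begin

definition vertex :: "nat set \<Rightarrow> bool" where
  "vertex A \<longleftrightarrow> finite A \<and> 0 \<notin> A"

text \<open>The interlacing conditions, with sets listed increasingly
  (0-based indices into sorted_list_of_set).\<close>
definition interl_lower :: "nat list \<Rightarrow> nat list \<Rightarrow> bool" where
  "interl_lower a b \<longleftrightarrow> length a = length b + 1 \<and>
     (\<forall>i < length b. a ! i \<le> b ! i \<and> b ! i \<le> a ! (i+1))"

definition interl_same :: "nat list \<Rightarrow> nat list \<Rightarrow> bool" where
  "interl_same a b \<longleftrightarrow> length a = length b \<and>
     (\<forall>i. i + 1 < length a \<longrightarrow> a ! i \<le> b ! i \<and> b ! i \<le> a ! (i+1)) \<and>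
     (length a \<ge> 1 \<longrightarrow> a ! (length a - 1) \<le> b ! (length a - 1))"

definition univ_adj :: "nat set \<Rightarrow> nat set \<Rightarrow> bool" where
  "univ_adj A B \<longleftrightarrow> A \<noteq> B \<and>
     (let a = sorted_list_of_set A; b = sorted_list_of_set B in
        interl_lower a b \<or> interl_lower b a \<or> interl_same a b \<or> interl_same b a
        \<or> (A = {} \<and> card B = 1) \<or> (B = {} \<and> card A = 1))"

definition kalton_adj :: "nat \<Rightarrow> nat set \<Rightarrow> nat set \<Rightarrow> bool" where
  "kalton_adj k A B \<longleftrightarrow> A \<noteq> B \<and> card A = k \<and> card B = k \<and>
     (let a = sorted_list_of_set A; b = sorted_list_of_set B in
        interl_same a b \<or> interl_same b a)"

text \<open>A walk from A to B in a graph with vertex predicate V and adjacency E,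
  given as its list of vertices; its length is the number of edges.\<close>
definition is_walk :: "(nat set \<Rightarrow> bool) \<Rightarrow> (nat set \<Rightarrow> nat set \<Rightarrow> bool)
    \<Rightarrow> nat set list \<Rightarrow> nat set \<Rightarrow> nat set \<Rightarrow> bool" where
  "is_walk V E ps A B \<longleftrightarrow> ps \<noteq> [] \<and> hd ps = A \<and> last ps = B \<and>
     (\<forall>X \<in> set ps. V X) \<and>
     (\<forall>i. i + 1 < length ps \<longrightarrow> E (ps ! i) (ps ! (i+1)))"

text \<open>Graph (shortest-path) metric, infinite if no path exists.\<close>
definition graph_dist :: "(nat set \<Rightarrow> bool) \<Rightarrow> (nat set \<Rightarrow> nat set \<Rightarrow> bool)
    \<Rightarrow> nat set \<Rightarrow> nat set \<Rightarrow> enat" where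
  "graph_dist V E A B = (INF ps \<in> {ps. is_walk V E ps A B}. enat (length ps - 1))"

definition d_I :: "nat set \<Rightarrow> nat set \<Rightarrow> enat" where
  "d_I = graph_dist vertex univ_adj"

definition d_I_k :: "nat \<Rightarrow> nat set \<Rightarrow> nat set \<Rightarrow> enat" where
  "d_I_k k = graph_dist (\<lambda>X. vertex X \<and> card X = k) (kalton_adj k)"

definition d_sum :: "nat set \<Rightarrow> nat set \<Rightarrow> nat" where
  "d_sum A B = Sup {nat \<bar>int (card (A \<inter> {p..q})) - int (card (B \<inter> {p..q}))\<bar> | p q. 1 \<le> p}"

end

theory Submission
  imports Defs
begin

text \<open>Compare A and B through the discrepancy
  disc A B n = #{a \<in> A. a \<le> n} - #{b \<in> B. b \<le> n}, which vanishes at 0. Since counts over an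
  interval {p..q} are differences of counts up to q and up to p - 1, d_sum A B is the width
  max disc - min disc of its range. Two distinct sets are adjacent in the interlacing graph exactly
  when their discrepancy stays in {0,1} or in {-1,0}, so each edge changes the width by at most one
  and d_sum \<le> d_I. Conversely, if the maximum M of the discrepancy is positive, the set C with
  #{c \<in> C. c \<le> n} = #{a \<in> A. a \<le> n} - [disc A B n = M] is a neighbour of A whose discrepancy
  with B has width one less; if #A = #B the discrepancy vanishes for large n, hence #C = #A.
  A negative minimum is handled symmetrically, and iterating gives a path of length d_sum that
  stays in [N]^k.\<close>

definition count_upto :: "nat set \<Rightarrow> nat \<Rightarrow> nat" where
  "count_upto X n = card {x \<in> X. x \<le> n}"

definition disc :: "nat set \<Rightarrow> nat set \<Rightarrow> nat \<Rightarrow> int" where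
  "disc A B n = int (count_upto A n) - int (count_upto B n)"

lemma count_upto_0: "0 \<notin> X \<Longrightarrow> count_upto X 0 = 0"
  unfolding count_upto_def by (auto intro!: card_eq_0_iff[THEN iffD2])

lemma count_upto_Suc:
  assumes "finite X"
  shows "count_upto X (Suc n) = count_upto X n + (if Suc n \<in> X then 1 else 0)"
proof -
  have "{x \<in> X. x \<le> Suc n} = {x \<in> X. x \<le> n} \<union> (if Suc n \<in> X then {Suc n} else {})"
    by (auto simp: le_Suc_eq)
  then show ?thesis
    unfolding count_upto_def using assms by auto
qed

lemma count_upto_le_card: "finite X \<Longrightarrow> count_upto X n \<le> card X"
  unfolding count_upto_def by (intro card_mono) auto

lemma count_upto_eq_card: "X \<subseteq> {..n} \<Longrightarrow> count_upto X n = card X"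
  unfolding count_upto_def by (metis (no_types, lifting) Collect_cong Collect_mem_eq atMost_iff subsetD)

lemma card_Int_atLeastAtMost:
  assumes "finite X" "1 \<le> p" "p \<le> Suc q"
  shows "int (card (X \<inter> {p..q})) = int (count_upto X q) - int (count_upto X (p - 1))"
proof -
  have "{x \<in> X. x \<le> q} = {x \<in> X. x \<le> p - 1} \<union> (X \<inter> {p..q})"
    using assms(2,3) by auto
  then have "card {x \<in> X. x \<le> q} = card {x \<in> X. x \<le> p - 1} + card (X \<inter> {p..q})"
    using assms by (simp only:) (rule card_Un_disjoint; auto)
  then show ?thesis
    unfolding count_upto_def by simp
qed

lemma count_upto_mono: "finite X \<Longrightarrow> m \<le> n \<Longrightarrow> count_upto X m \<le> count_upto X n"
  unfolding count_upto_def by (intro card_mono) auto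

lemma count_upto_nth_sorted_list_of_set:
  assumes fin: "finite X" and i: "i < card X"
  shows "count_upto X (sorted_list_of_set X ! i) = Suc i"
proof -
  let ?a = "sorted_list_of_set X"
  have strict: "sorted_wrt (<) ?a" and "distinct ?a" and set: "set ?a = X" and len: "length ?a = card X"
    using fin by simp_all
  have "{x \<in> X. x \<le> ?a ! i} = (!) ?a ` {..i}"
  proof (intro equalityI subsetI)
    fix x assume x: "x \<in> {x \<in> X. x \<le> ?a ! i}"
    then have "x \<in> set ?a"
      using set by simp
    then obtain j where "j < card X" "x = ?a ! j"
      using len by (metis in_set_conv_nth)
    moreover have "?a ! j \<le> ?a ! i"
      using x calculation by simp
    ultimately have "j \<le> i" "x = ?a ! j"
      using sorted_wrt_nth_less[OF strict, of i j] len by fastforce+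
    then show "x \<in> (!) ?a ` {..i}" by blast
  next
    fix x assume "x \<in> (!) ?a ` {..i}"
    then obtain j where "j \<le> i" "x = ?a ! j" by blast
    then show "x \<in> {x \<in> X. x \<le> ?a ! i}"
      using sorted_nth_mono[OF sorted_sorted_list_of_set, of j i X] set len i by auto
  qed
  moreover have "inj_on ((!) ?a) {..i}"
    using \<open>distinct ?a\<close> i len by (simp add: inj_on_def nth_eq_iff_index_eq)
  ultimately show ?thesis
    by (simp add: count_upto_def card_image)
qed

lemma nth_sorted_list_of_set_le_iff:
  assumes fin: "finite X" and i: "i < card X"
  shows "sorted_list_of_set X ! i \<le> n \<longleftrightarrow> i < count_upto X n"
proof
  assume "sorted_list_of_set X ! i \<le> n"
  then show "i < count_upto X n"
    using count_upto_mono[OF fin] count_upto_nth_sorted_list_of_set[OF fin i] by (metis Suc_le_eq)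
next
  assume less: "i < count_upto X n"
  show "sorted_list_of_set X ! i \<le> n"
  proof (rule ccontr)
    assume "\<not> sorted_list_of_set X ! i \<le> n"
    moreover have "sorted_list_of_set X ! i \<in> X"
      using fin i nth_mem[of i "sorted_list_of_set X"] by simp
    ultimately have "{x \<in> X. x \<le> n} \<subset> {x \<in> X. x \<le> sorted_list_of_set X ! i}"
      by auto
    then have "count_upto X n < count_upto X (sorted_list_of_set X ! i)"
      unfolding count_upto_def using fin by (intro psubset_card_mono) auto
    then have "count_upto X n < Suc i"
      using count_upto_nth_sorted_list_of_set[OF fin i] by simp
    then show False
      using less by simp
  qed
qed

lemma disc_0: "0 \<notin> A \<Longrightarrow> 0 \<notin> B \<Longrightarrow> disc A B 0 = 0"
  unfolding disc_def by (simp add: count_upto_0)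

lemma disc_Suc:
  "finite A \<Longrightarrow> finite B \<Longrightarrow>
    disc A B (Suc n) = disc A B n + (if Suc n \<in> A then 1 else 0) - (if Suc n \<in> B then 1 else 0)"
  unfolding disc_def by (auto simp: count_upto_Suc)

lemma disc_swap: "disc B A n = - disc A B n"
  unfolding disc_def by simp

lemma disc_trans: "disc A B n = disc A C n + disc C B n"
  unfolding disc_def by simp

lemma eq_if_disc_eq_0:
  assumes A: "vertex A" and B: "vertex B" and disc: "\<And>n. disc A B n = 0"
  shows "A = B"
proof (rule set_eqI)
  fix x
  show "x \<in> A \<longleftrightarrow> x \<in> B"
  proof (cases x)
    case 0
    then show ?thesis using A B by (simp add: vertex_def)
  next
    case (Suc k)
    have "disc A B (Suc k) = disc A B k + (if Suc k \<in> A then 1 else 0) - (if Suc k \<in> B then 1 else 0)"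
      using A B by (simp add: vertex_def disc_Suc)
    then show ?thesis
      using Suc disc[of k] disc[of "Suc k"] by (simp split: if_splits)
  qed
qed

lemma disc_bounds_attained:
  assumes "finite A" "finite B"
  obtains m M nm nM where "\<And>n. m \<le> disc A B n \<and> disc A B n \<le> M" "disc A B nm = m" "disc A B nM = M"
proof -
  have "disc A B n \<in> {- int (card B)..int (card A)}" for n
    using assms count_upto_le_card[of A n] count_upto_le_card[of B n] by (simp add: disc_def)
  then have fin: "finite (range (disc A B))"
    by (meson finite_atLeastAtMost_int finite_subset image_subsetI)
  obtain nm where "disc A B nm = Min (range (disc A B))"
    using Min_in[OF fin] by auto
  moreover obtain nM where "disc A B nM = Max (range (disc A B))"
    using Max_in[OF fin] by auto
  ultimately show ?thesis
    using fin by (intro that[of "Min (range (disc A B))" "Max (range (disc A B))" nm nM]) auto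
qed

lemma card_Int_diff_eq_disc:
  "finite A \<Longrightarrow> finite B \<Longrightarrow> 1 \<le> p \<Longrightarrow> p \<le> Suc q \<Longrightarrow>
    int (card (A \<inter> {p..q})) - int (card (B \<inter> {p..q})) = disc A B q - disc A B (p - 1)"
  unfolding disc_def by (simp add: card_Int_atLeastAtMost)

lemma d_sum_eq_width:
  assumes fin: "finite A" "finite B"
    and bounds: "\<And>n. m \<le> disc A B n \<and> disc A B n \<le> M"
    and "disc A B nm = m" "disc A B nM = M"
  shows "d_sum A B = nat (M - m)"
  unfolding d_sum_def
proof (rule cSup_eq_maximum)
  let ?p = "Suc (min nm nM)" and ?q = "max nm nM"
  have "\<bar>int (card (A \<inter> {?p..?q})) - int (card (B \<inter> {?p..?q}))\<bar> = M - m"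
    using card_Int_diff_eq_disc[OF fin, of ?p ?q] assms(4,5) bounds[of 0]
    by (cases "nm \<le> nM") (auto simp: min_def max_def)
  then show "nat (M - m) \<in> {nat \<bar>int (card (A \<inter> {p..q})) - int (card (B \<inter> {p..q}))\<bar> | p q. 1 \<le> p}"
    by (intro CollectI exI[of _ ?p] exI[of _ ?q]) simp
next
  fix x assume "x \<in> {nat \<bar>int (card (A \<inter> {p..q})) - int (card (B \<inter> {p..q}))\<bar> | p q. 1 \<le> p}"
  then obtain p q where x: "x = nat \<bar>int (card (A \<inter> {p..q})) - int (card (B \<inter> {p..q}))\<bar>"
    and p: "1 \<le> p"
    by auto
  show "x \<le> nat (M - m)"
  proof (cases "p \<le> Suc q")
    case True
    have "\<bar>disc A B q - disc A B (p - 1)\<bar> \<le> M - m"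
      using bounds[of q] bounds[of "p - 1"] by linarith
    then show ?thesis
      using x card_Int_diff_eq_disc[OF fin p True] by (simp add: nat_mono)
  next
    case False
    then have "{p..q} = {}" by simp
    then show ?thesis using x by simp
  qed
qed

lemma d_sum_commute: "d_sum A B = d_sum B A"
  unfolding d_sum_def by (simp add: abs_minus_commute)

definition interlaces :: "nat list \<Rightarrow> nat list \<Rightarrow> bool" where
  "interlaces a b \<longleftrightarrow> (length a = length b \<or> length a = length b + 1) \<and>
     (\<forall>i < length b. a ! i \<le> b ! i) \<and>
     (\<forall>i < length b. i + 1 < length a \<longrightarrow> b ! i \<le> a ! (i + 1))"

lemma interlaces_iff: "interlaces a b \<longleftrightarrow> interl_lower a b \<or> interl_same a b"
proof
  assume "interlaces a b"
  then have lengths: "length a = length b \<or> length a = length b + 1"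
    and below: "\<forall>i < length b. a ! i \<le> b ! i"
    and above: "\<forall>i < length b. i + 1 < length a \<longrightarrow> b ! i \<le> a ! (i + 1)"
    unfolding interlaces_def by blast+
  from lengths show "interl_lower a b \<or> interl_same a b"
  proof
    assume "length a = length b"
    then have "interl_same a b"
      using below above unfolding interl_same_def by simp
    then show ?thesis ..
  next
    assume "length a = length b + 1"
    then have "interl_lower a b"
      using below above unfolding interl_lower_def by simp
    then show ?thesis ..
  qed
next
  assume "interl_lower a b \<or> interl_same a b"
  then show "interlaces a b"
  proof
    assume "interl_lower a b"
    then show ?thesis
      unfolding interl_lower_def interlaces_def by simp
  next
    assume same: "interl_same a b"
    then have "length a = length b" and "\<forall>i. i + 1 < length a \<longrightarrow> b ! i \<le> a ! (i + 1)"
      unfolding interl_same_def by simp_all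
    moreover have "a ! i \<le> b ! i" if "i < length b" for i
      using same that unfolding interl_same_def by (cases "length b = Suc i") auto
    ultimately show ?thesis
      unfolding interlaces_def by simp
  qed
qed

lemma interlaces_sorted_if_disc_bounds:
  assumes fA: "finite A" and fB: "finite B"
    and bounds: "\<And>n. 0 \<le> disc A B n \<and> disc A B n \<le> 1"
  shows "interlaces (sorted_list_of_set A) (sorted_list_of_set B)"
proof -
  let ?a = "sorted_list_of_set A" and ?b = "sorted_list_of_set B"
  obtain N where "A \<union> B \<subseteq> {..N}"
    using fA fB finite_nat_set_iff_bounded_le[of "A \<union> B"] by (auto simp: subset_eq)
  then have "disc A B N = int (card A) - int (card B)"
    by (simp add: disc_def count_upto_eq_card)
  then have "card A = card B \<or> card A = card B + 1"
    using bounds[of N] by linarith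
  moreover have "?a ! i \<le> ?b ! i" if i: "i < card B" for i
  proof -
    have "i < count_upto B (?b ! i)"
      using nth_sorted_list_of_set_le_iff[OF fB i, of "?b ! i"] by simp
    also have "\<dots> \<le> count_upto A (?b ! i)"
      using bounds[of "?b ! i"] by (simp add: disc_def)
    finally have "i < count_upto A (?b ! i)" .
    moreover from this have "i < card A"
      using count_upto_le_card[OF fA] less_le_trans by blast
    ultimately show ?thesis
      using nth_sorted_list_of_set_le_iff[OF fA] by blast
  qed
  moreover have "?b ! i \<le> ?a ! (i + 1)" if i: "i < card B" "i + 1 < card A" for i
  proof -
    have "i + 1 < count_upto A (?a ! (i + 1))"
      using nth_sorted_list_of_set_le_iff[OF fA i(2), of "?a ! (i + 1)"] by simp
    also have "\<dots> \<le> count_upto B (?a ! (i + 1)) + 1"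
      using bounds[of "?a ! (i + 1)"] by (simp add: disc_def)
    finally show ?thesis
      using nth_sorted_list_of_set_le_iff[OF fB i(1)] by simp
  qed
  ultimately show ?thesis
    unfolding interlaces_def using fA fB by auto
qed

lemma disc_bounds_if_interlaces_sorted:
  assumes fA: "finite A" and fB: "finite B"
    and interlaces: "interlaces (sorted_list_of_set A) (sorted_list_of_set B)"
  shows "0 \<le> disc A B n \<and> disc A B n \<le> 1"
proof -
  let ?a = "sorted_list_of_set A" and ?b = "sorted_list_of_set B" and ?k = "count_upto B n"
  have lengths: "card A = card B \<or> card A = card B + 1"
    and below: "\<And>i. i < card B \<Longrightarrow> ?a ! i \<le> ?b ! i"
    and above: "\<And>i. i < card B \<Longrightarrow> i + 1 < card A \<Longrightarrow> ?b ! i \<le> ?a ! (i + 1)"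
    using interlaces fA fB by (auto simp: interlaces_def)
  have "?k \<le> count_upto A n"
  proof (cases ?k)
    case (Suc j)
    then have "j < card B" and "?b ! j \<le> n"
      using count_upto_le_card[OF fB, of n] nth_sorted_list_of_set_le_iff[OF fB, of j n] by auto
    then show ?thesis
      using Suc lengths below[of j] nth_sorted_list_of_set_le_iff[OF fA, of j n] by auto
  qed simp
  moreover have "count_upto A n \<le> ?k + 1"
  proof (rule ccontr)
    assume "\<not> count_upto A n \<le> ?k + 1"
    then have "?k + 1 < card A" and "?a ! (?k + 1) \<le> n"
      using count_upto_le_card[OF fA, of n] nth_sorted_list_of_set_le_iff[OF fA, of "?k + 1" n]
      by auto
    moreover have "?k < card B"
      using calculation(1) lengths by auto
    ultimately have "?k < count_upto B n"
      using above[of ?k] nth_sorted_list_of_set_le_iff[OF fB, of ?k n] by auto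
    then show False by simp
  qed
  ultimately show ?thesis
    by (simp add: disc_def)
qed

lemma univ_adj_iff_interlaces:
  "univ_adj A B \<longleftrightarrow> A \<noteq> B \<and>
    (interlaces (sorted_list_of_set A) (sorted_list_of_set B) \<or>
     interlaces (sorted_list_of_set B) (sorted_list_of_set A))"
proof -
  have "interl_lower (sorted_list_of_set Y) (sorted_list_of_set X)"
    if "X = {}" "card Y = 1" for X Y :: "nat set"
    using that by (simp add: interl_lower_def)
  then show ?thesis
    unfolding univ_adj_def Let_def interlaces_iff by blast
qed

lemma interlaces_sorted_iff_disc_bounds:
  assumes "finite A" "finite B"
  shows "interlaces (sorted_list_of_set A) (sorted_list_of_set B) \<longleftrightarrow>
    (\<forall>n. 0 \<le> disc A B n \<and> disc A B n \<le> 1)"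
  using interlaces_sorted_if_disc_bounds[OF assms] disc_bounds_if_interlaces_sorted[OF assms]
  by blast

lemma univ_adj_iff_disc_bounds:
  "finite A \<Longrightarrow> finite B \<Longrightarrow> univ_adj A B \<longleftrightarrow> A \<noteq> B \<and>
    ((\<forall>n. 0 \<le> disc A B n \<and> disc A B n \<le> 1) \<or> (\<forall>n. 0 \<le> disc B A n \<and> disc B A n \<le> 1))"
  by (simp add: univ_adj_iff_interlaces interlaces_sorted_iff_disc_bounds)

lemma univ_adj_commute: "univ_adj A B \<longleftrightarrow> univ_adj B A"
  unfolding univ_adj_def Let_def by blast

lemma disc_diff_le_1_if_univ_adj:
  assumes "finite A" "finite B" "univ_adj A B"
  shows "\<bar>disc A B q - disc A B p\<bar> \<le> 1"
proof -
  have "(\<forall>n. 0 \<le> disc A B n \<and> disc A B n \<le> 1) \<or> (\<forall>n. - 1 \<le> disc A B n \<and> disc A B n \<le> 0)"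
    using assms by (auto simp: univ_adj_iff_disc_bounds disc_swap[of B A])
  then have "0 \<le> disc A B q \<and> disc A B q \<le> 1 \<and> 0 \<le> disc A B p \<and> disc A B p \<le> 1 \<or>
      - 1 \<le> disc A B q \<and> disc A B q \<le> 0 \<and> - 1 \<le> disc A B p \<and> disc A B p \<le> 0"
    by blast
  then show ?thesis
    by (simp add: abs_le_iff) linarith
qed

lemma is_walk_iff_successively:
  "is_walk V E ps A B \<longleftrightarrow>
    ps \<noteq> [] \<and> hd ps = A \<and> last ps = B \<and> (\<forall>X \<in> set ps. V X) \<and> successively E ps"
  by (simp add: is_walk_def successively_conv_nth)

lemma is_walk_Cons: "is_walk V E ps C B \<Longrightarrow> V A \<Longrightarrow> E A C \<Longrightarrow> is_walk V E (A # ps) A B"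
  by (auto simp: is_walk_iff_successively successively_Cons)

lemma is_walk_snoc: "is_walk V E ps A C \<Longrightarrow> V B \<Longrightarrow> E C B \<Longrightarrow> is_walk V E (ps @ [B]) A B"
  by (auto simp: is_walk_iff_successively successively_append_iff)

lemma is_walk_mono:
  assumes "is_walk V E ps A B" "\<And>X. X \<in> set ps \<Longrightarrow> V' X"
    and "\<And>X Y. X \<in> set ps \<Longrightarrow> Y \<in> set ps \<Longrightarrow> E X Y \<Longrightarrow> E' X Y"
  shows "is_walk V' E' ps A B"
  using assms by (auto simp: is_walk_iff_successively intro: successively_mono)

lemma disc_diff_le_walk_length:
  "is_walk vertex univ_adj ps A B \<Longrightarrow> \<bar>disc A B q - disc A B p\<bar> \<le> int (length ps) - 1"
proof (induction ps arbitrary: A)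
  case Nil
  then show ?case by (simp add: is_walk_def)
next
  case (Cons X ps)
  show ?case
  proof (cases ps)
    case Nil
    then have "A = B"
      using Cons.prems by (auto simp: is_walk_def)
    then show ?thesis by (simp add: disc_def)
  next
    case (Cons Y ps')
    then have "X = A" and "vertex A" and "vertex Y" and "univ_adj A Y"
      and "is_walk vertex univ_adj ps Y B"
      using Cons.prems by (auto simp: is_walk_iff_successively)
    then have "\<bar>disc A Y q - disc A Y p\<bar> \<le> 1"
      using disc_diff_le_1_if_univ_adj by (simp add: vertex_def)
    moreover have "\<bar>disc Y B q - disc Y B p\<bar> \<le> int (length ps) - 1"
      using Cons.IH \<open>is_walk vertex univ_adj ps Y B\<close> .
    ultimately show ?thesis
      using disc_trans[of A B _ Y] by simp
  qed
qed

lemma d_sum_le_walk_length: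
  assumes walk: "is_walk vertex univ_adj ps A B"
  shows "d_sum A B \<le> length ps - 1"
proof -
  have fin: "finite A" "finite B"
    using walk by (auto simp: is_walk_def vertex_def)
  obtain m M nm nM where bounds: "\<And>n. m \<le> disc A B n \<and> disc A B n \<le> M"
    and "disc A B nm = m" "disc A B nM = M"
    using disc_bounds_attained[OF fin] by blast
  then have "d_sum A B = nat (M - m)" and "M - m \<le> int (length ps) - 1"
    using d_sum_eq_width[OF fin bounds] disc_diff_le_walk_length[OF walk, of nM nm]
    by auto
  then show ?thesis by simp
qed

lemma exists_vertex_with_count:
  fixes F :: "nat \<Rightarrow> int"
  assumes F0: "F 0 = 0"
    and steps: "\<And>n. F (Suc n) = F n \<or> F (Suc n) = F n + 1"
    and eventually_const: "\<And>n. N \<le> n \<Longrightarrow> F (Suc n) = F n"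
  obtains C where "vertex C" "\<And>n. int (count_upto C n) = F n"
proof -
  define C where "C = {n. F n = F (n - 1) + 1}"
  have "0 \<notin> C"
    by (simp add: C_def)
  moreover have "C \<subseteq> {..N}"
  proof
    fix n assume "n \<in> C"
    with \<open>0 \<notin> C\<close> obtain k where "n = Suc k" "F (Suc k) = F k + 1"
      by (cases n) (auto simp: C_def)
    with eventually_const[of k] show "n \<in> {..N}" by force
  qed
  then have "finite C"
    using finite_subset by blast
  moreover have "int (count_upto C n) = F n" for n
  proof (induction n)
    case 0
    then show ?case using \<open>0 \<notin> C\<close> F0 by (simp add: count_upto_0)
  next
    case (Suc n)
    then show ?case
      using \<open>finite C\<close> steps[of n] by (auto simp: count_upto_Suc C_def)
  qed
  ultimately show ?thesis
    using that by (simp add: vertex_def)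
qed

lemma exists_neighbour_lowering_max:
  assumes A: "vertex A" and B: "vertex B"
    and bounds: "\<And>n. m \<le> disc A B n \<and> disc A B n \<le> M"
    and at_min: "disc A B nm = m" and at_max: "disc A B nM = M" and "0 < M"
  obtains C where "vertex C" "univ_adj A C" "d_sum C B = nat (M - 1 - m)"
    "card A = card B \<Longrightarrow> card C = card A"
proof -
  have fA: "finite A" and fB: "finite B" and "disc A B 0 = 0"
    using A B by (auto simp: vertex_def disc_0)
  obtain N where N: "A \<union> B \<subseteq> {..N}"
    using fA fB finite_nat_set_iff_bounded_le[of "A \<union> B"] by (auto simp: subset_eq)
  define F where "F n = int (count_upto A n) - (if disc A B n = M then 1 else 0)" for n
  \<comment> \<open>The level M is entered only at points of A - B and left only at points of B - A.\<close>
  have "F (Suc n) = F n \<or> F (Suc n) = F n + 1" for n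
    using bounds[of n] bounds[of "Suc n"] disc_Suc[OF fA fB, of n] count_upto_Suc[OF fA, of n]
    by (auto simp: F_def split: if_splits)
  moreover have "F (Suc n) = F n" if "N \<le> n" for n
    using that N disc_Suc[OF fA fB, of n] count_upto_Suc[OF fA, of n] by (auto simp: F_def)
  moreover have "F 0 = 0"
    using A \<open>disc A B 0 = 0\<close> \<open>0 < M\<close> by (simp add: F_def vertex_def count_upto_0)
  ultimately obtain C where C: "vertex C" and count_C: "\<And>n. int (count_upto C n) = F n"
    using exists_vertex_with_count by metis
  have disc_AC: "disc A C n = (if disc A B n = M then 1 else 0)" for n
    using count_C[of n] by (simp add: disc_def F_def)
  have disc_CB: "disc C B n = disc A B n - (if disc A B n = M then 1 else 0)" for n
    using count_C[of n] by (simp add: disc_def F_def)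
  have fC: "finite C"
    using C by (simp add: vertex_def)
  have "A \<noteq> C"
    using disc_AC[of nM] at_max by (auto simp: disc_def)
  then have "univ_adj A C"
    using fA fC by (simp add: univ_adj_iff_disc_bounds disc_AC)
  moreover have "d_sum C B = nat (M - 1 - m)"
  proof (rule d_sum_eq_width[OF fC fB])
    show "m \<le> disc C B n \<and> disc C B n \<le> M - 1" for n
      using bounds[of n] bounds[of 0] \<open>disc A B 0 = 0\<close> \<open>0 < M\<close> by (auto simp: disc_CB)
    show "disc C B nm = m" "disc C B nM = M - 1"
      using at_min at_max bounds[of 0] \<open>disc A B 0 = 0\<close> \<open>0 < M\<close> by (auto simp: disc_CB)
  qed
  moreover have "card C = card A" if "card A = card B"
  proof -
    obtain N' where N': "A \<union> B \<union> C \<subseteq> {..N'}"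
      using fA fB fC finite_nat_set_iff_bounded_le[of "A \<union> B \<union> C"] by (auto simp: subset_eq)
    then have "disc A B N' = 0" and "disc A C N' = int (card A) - int (card C)"
      using that by (simp_all add: disc_def count_upto_eq_card)
    then show ?thesis
      using disc_AC[of N'] \<open>0 < M\<close> by simp
  qed
  ultimately show ?thesis
    using that C by blast
qed

lemma exists_neighbour_closer:
  assumes A: "vertex A" and B: "vertex B" and "d_sum A B = Suc d"
  obtains C where "vertex C" "univ_adj A C" "d_sum C B = d" "card A = card B \<Longrightarrow> card C = card A"
    | C where "vertex C" "univ_adj C B" "d_sum A C = d" "card A = card B \<Longrightarrow> card C = card A"
proof -
  have fA: "finite A" and fB: "finite B" and "disc A B 0 = 0"
    using A B by (auto simp: vertex_def disc_0)
  obtain m M nm nM where bounds: "\<And>n. m \<le> disc A B n \<and> disc A B n \<le> M"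
    and at_min: "disc A B nm = m" and at_max: "disc A B nM = M"
    using disc_bounds_attained[OF fA fB] by blast
  have "M - m = int (Suc d)" and "m \<le> 0" and "0 \<le> M"
    using \<open>d_sum A B = Suc d\<close> d_sum_eq_width[OF fA fB bounds at_min at_max]
      bounds[of 0] \<open>disc A B 0 = 0\<close> by auto
  show ?thesis
  proof (cases "0 < M")
    case True
    obtain C where "vertex C" "univ_adj A C" "d_sum C B = nat (M - 1 - m)"
      "card A = card B \<Longrightarrow> card C = card A"
      using exists_neighbour_lowering_max[OF A B bounds at_min at_max True] by blast
    moreover have "nat (M - 1 - m) = d"
      using \<open>M - m = int (Suc d)\<close> by simp
    ultimately show ?thesis
      using that(1)[of C] by simp
  next
    case False
    have "- M \<le> disc B A n \<and> disc B A n \<le> - m" for n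
      using bounds[of n] by (simp add: disc_swap[of B A])
    moreover have "disc B A nM = - M" and "disc B A nm = - m" and "0 < - m"
      using at_min at_max False \<open>M - m = int (Suc d)\<close> by (simp_all add: disc_swap[of B A])
    ultimately obtain C where "vertex C" "univ_adj B C" "d_sum C A = nat (- m - 1 - - M)"
      "card B = card A \<Longrightarrow> card C = card B"
      using exists_neighbour_lowering_max[OF B A] by blast
    moreover have "nat (- m - 1 - - M) = d"
      using \<open>M - m = int (Suc d)\<close> by simp
    ultimately show ?thesis
      using that(2)[of C] by (simp add: univ_adj_commute d_sum_commute)
  qed
qed

lemma eq_if_d_sum_eq_0:
  assumes "vertex A" "vertex B" "d_sum A B = 0"
  shows "A = B"
proof (rule eq_if_disc_eq_0[OF assms(1,2)])
  have fin: "finite A" "finite B" and "disc A B 0 = 0"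
    using assms by (auto simp: vertex_def disc_0)
  obtain m M nm nM where bounds: "\<And>n. m \<le> disc A B n \<and> disc A B n \<le> M"
    and "disc A B nm = m" "disc A B nM = M"
    using disc_bounds_attained[OF fin] by blast
  then have "M \<le> m"
    using d_sum_eq_width[OF fin bounds] assms(3) by simp
  show "disc A B n = 0" for n
    using \<open>M \<le> m\<close> bounds[of n] bounds[of 0] \<open>disc A B 0 = 0\<close> by linarith
qed

lemma exists_walk_of_length_d_sum:
  "d_sum A B = d \<Longrightarrow> vertex A \<Longrightarrow> vertex B \<Longrightarrow>
    \<exists>ps. is_walk vertex univ_adj ps A B \<and> length ps = Suc d \<and>
      (card A = card B \<longrightarrow> (\<forall>X \<in> set ps. card X = card A))"
proof (induction d arbitrary: A B)
  case 0
  then have "A = B"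
    using eq_if_d_sum_eq_0 by simp
  then have "is_walk vertex univ_adj [A] A B"
    using 0 by (simp add: is_walk_def)
  then show ?case
    by (intro exI[of _ "[A]"]) simp
next
  case (Suc d)
  from Suc.prems(2,3,1) show ?case
  proof (cases rule: exists_neighbour_closer)
    case (1 C)
    from Suc.IH[OF 1(3,1) Suc.prems(3)] obtain ps
      where walk: "is_walk vertex univ_adj ps C B" and "length ps = Suc d"
        and cards: "card C = card B \<longrightarrow> (\<forall>X \<in> set ps. card X = card C)"
      by blast
    have "card A = card B \<longrightarrow> (\<forall>X \<in> set (A # ps). card X = card A)"
    proof
      assume "card A = card B"
      with 1(4) have "card C = card A" by blast
      then have "card C = card B"
        using \<open>card A = card B\<close> by (rule trans)
      with cards have "\<forall>X \<in> set ps. card X = card C" ..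
      with \<open>card C = card A\<close> show "\<forall>X \<in> set (A # ps). card X = card A" by simp
    qed
    moreover have "length (A # ps) = Suc (Suc d)"
      using \<open>length ps = Suc d\<close> by simp
    ultimately show ?thesis
      using is_walk_Cons[OF walk Suc.prems(2) 1(2)] by blast
  next
    case (2 C)
    from Suc.IH[OF 2(3) Suc.prems(2) 2(1)] obtain ps
      where walk: "is_walk vertex univ_adj ps A C" and "length ps = Suc d"
        and cards: "card A = card C \<longrightarrow> (\<forall>X \<in> set ps. card X = card A)"
      by blast
    have "card A = card B \<longrightarrow> (\<forall>X \<in> set (ps @ [B]). card X = card A)"
    proof
      assume "card A = card B"
      with 2(4) have "card A = card C" by simp
      with cards have "\<forall>X \<in> set ps. card X = card A" by blast
      with \<open>card A = card B\<close> show "\<forall>X \<in> set (ps @ [B]). card X = card A" by simp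
    qed
    moreover have "length (ps @ [B]) = Suc (Suc d)"
      using \<open>length ps = Suc d\<close> by simp
    ultimately show ?thesis
      using is_walk_snoc[OF walk Suc.prems(3) 2(2)] by blast
  qed
qed

lemma graph_dist_eq_enatI:
  assumes "is_walk V E ps A B" "length ps = Suc d"
    and "\<And>qs. is_walk V E qs A B \<Longrightarrow> d \<le> length qs - 1"
  shows "graph_dist V E A B = enat d"
  unfolding graph_dist_def
proof (rule antisym)
  show "(INF qs \<in> {qs. is_walk V E qs A B}. enat (length qs - 1)) \<le> enat d"
    using assms(1,2) by (intro INF_lower2[of ps]) auto
  show "enat d \<le> (INF qs \<in> {qs. is_walk V E qs A B}. enat (length qs - 1))"
    using assms(3) by (intro INF_greatest) simp
qed

lemma d_I_eq_d_sum:
  assumes "vertex A" "vertex B"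
  shows "d_I A B = enat (d_sum A B)"
proof -
  obtain ps where "is_walk vertex univ_adj ps A B" "length ps = Suc (d_sum A B)"
    using exists_walk_of_length_d_sum[OF refl assms] by blast
  then show ?thesis
    unfolding d_I_def using d_sum_le_walk_length by (rule graph_dist_eq_enatI)
qed

lemma kalton_adj_iff_univ_adj:
  assumes "finite X" "finite Y" "card X = k" "card Y = k"
  shows "kalton_adj k X Y \<longleftrightarrow> univ_adj X Y"
  using assms by (auto simp: kalton_adj_def univ_adj_def Let_def interl_lower_def)

lemma d_I_k_eq_d_sum:
  assumes A: "vertex A" and B: "vertex B" and "card A = k" "card B = k"
  shows "d_I_k k A B = enat (d_sum A B)"
proof -
  let ?V = "\<lambda>X. vertex X \<and> card X = k"
  obtain ps where walk: "is_walk vertex univ_adj ps A B" and "length ps = Suc (d_sum A B)"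
    and "\<forall>X \<in> set ps. card X = k"
    using exists_walk_of_length_d_sum[OF refl A B] \<open>card A = k\<close> \<open>card B = k\<close> by auto
  moreover from this have "is_walk ?V (kalton_adj k) ps A B"
    by (intro is_walk_mono[OF walk])
      (auto simp: is_walk_def kalton_adj_iff_univ_adj vertex_def)
  moreover have "d_sum A B \<le> length qs - 1" if qs: "is_walk ?V (kalton_adj k) qs A B" for qs
  proof -
    have "?V X" if "X \<in> set qs" for X
      using qs that by (simp add: is_walk_def)
    then have "is_walk vertex univ_adj qs A B"
      by (intro is_walk_mono[OF qs]) (auto simp: kalton_adj_iff_univ_adj vertex_def)
    then show ?thesis
      by (rule d_sum_le_walk_length)
  qed
  ultimately show ?thesis
    unfolding d_I_k_def by (intro graph_dist_eq_enatI)
qed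

theorem theorem5p1:
  shows "(\<forall>A B. vertex A \<longrightarrow> vertex B \<longrightarrow> enat (d_sum A B) = d_I A B) \<and>
    (\<forall>A B k. vertex A \<longrightarrow> vertex B \<longrightarrow> card A = k \<longrightarrow> card B = k \<longrightarrow>
       (\<exists>ps. is_walk vertex univ_adj ps A B \<and> (\<forall>X \<in> set ps. card X = k) \<and>
             enat (length ps - 1) = d_I A B)) \<and>
    (\<forall>A B k. vertex A \<longrightarrow> vertex B \<longrightarrow> card A = k \<longrightarrow> card B = k \<longrightarrow>
       d_I A B = d_I_k k A B)"
proof (intro conjI allI impI)
  fix A B assume "vertex A" "vertex B"
  then show "enat (d_sum A B) = d_I A B"
    by (simp add: d_I_eq_d_sum)
next
  fix A B k assume A: "vertex A" and B: "vertex B" and "card A = k" "card B = k"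
  then show "\<exists>ps. is_walk vertex univ_adj ps A B \<and> (\<forall>X \<in> set ps. card X = k) \<and>
      enat (length ps - 1) = d_I A B"
    using exists_walk_of_length_d_sum[OF refl A B] by (auto simp: d_I_eq_d_sum)
next
  fix A B k assume "vertex A" "vertex B" "card A = k" "card B = k"
  then show "d_I A B = d_I_k k A B"
    by (simp add: d_I_eq_d_sum d_I_k_eq_d_sum)
qed

end
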